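(* Let $i,m\in[1,M]$ be black vertices and $j,n\in[1,N]$ white vertices, and define $a$ by $\#\{i,j,m,n\}=4-a$. Let $(k,\ell),(p,q)$ be two further black–white pairs and define $b$ by $\#\{i,j,m,n,k,\ell,p,q\}=8-b$. Then $$\mathbb E[A_{ij}A_{mn}]=O\Big(\frac{d_b}N\Big)^{2-\lfloor a/2\rfloor},\qquad \mathbb E[A_{ij}A_{mn}A_{k\ell}A_{pq}]=O\Big(\frac{d_b}N\Big)^{4-\lfloor b/2\rfloor}.$$
   Context: Let $M\ge N$, $\alpha=M/N\ge1$ fixed, $N\to\infty$; $d_b,d_w$ positive integers with $Md_b=Nd_w$, $N^{c_0}\le d_b\le N^{2/3-c_0}$ for a fixed $c_0>0$. $A\in\{0,1\}^{M\times N}$ is the biadjacency matrix of a bipartite graph drawn uniformly at random from the set of bipartite graphs with $M$ black vertices of degree $d_b$ and $N$ white vertices of degree $d_w$; $A_{xy}=1$ iff black vertex $x$ is adjacent to white vertex $y$. Black and white vertices are distinct labels, so $\#\{\cdot\}$ counts distinct vertices. The expectation is under the uniform measure and implicit constants do not depend on $N$ or the indices. *)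

theory Defs
  imports Complex_Main
begin

text \<open>A matrix is a predicate A x y, meaning
  black x is adjacent to white y; it is required to vanish outside the box.\<close>
definition biregular_graphs :: "nat \<Rightarrow> nat \<Rightarrow> nat \<Rightarrow> nat \<Rightarrow> (nat \<Rightarrow> nat \<Rightarrow> bool) set" where
  "biregular_graphs M N db dw =
     {A. (\<forall>x y. A x y \<longrightarrow> x < M \<and> y < N)
       \<and> (\<forall>x<M. card {y. y < N \<and> A x y} = db)
       \<and> (\<forall>y<N. card {x. x < M \<and> A x y} = dw)}"

definition unif_expect :: "nat \<Rightarrow> nat \<Rightarrow> nat \<Rightarrow> nat \<Rightarrow> ((nat \<Rightarrow> nat \<Rightarrow> bool) \<Rightarrow> real) \<Rightarrow> real" where
  "unif_expect M N db dw f =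
     (\<Sum>A\<in>biregular_graphs M N db dw. f A) / real (card (biregular_graphs M N db dw))"

definition entry :: "(nat \<Rightarrow> nat \<Rightarrow> bool) \<Rightarrow> nat \<Rightarrow> nat \<Rightarrow> real" where
  "entry A x y = (if A x y then 1 else 0)"

end

theory Submission
  imports Defs "HOL-Combinatorics.Permutations"
begin

text \<open>The expectation of a product of entries is the fraction of graphs containing a given edge
  set P. Relabelling white vertices is a symmetry of the uniform model, so all edges from a
  black vertex x to white vertices outside P are equally likely given P; since x has only db
  neighbours, adding an edge at a new white vertex costs a factor db/(N - |P|) \<le> 2 db/N.
  Transposing the graph gives the same for a new black vertex, with factor 2 dw/M = 2 db/N.
  An edge set with v distinct vertices is built edge by edge with at least \<lceil>v/2\<rceil> edges that
  introduce a new vertex.\<close>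

definition graphs_containing ::
    "nat \<Rightarrow> nat \<Rightarrow> nat \<Rightarrow> nat \<Rightarrow> (nat \<times> nat) set \<Rightarrow> (nat \<Rightarrow> nat \<Rightarrow> bool) set" where
  "graphs_containing M N db dw P = {A \<in> biregular_graphs M N db dw. \<forall>(x, y)\<in>P. A x y}"

definition vertex_count :: "(nat \<times> nat) set \<Rightarrow> nat" where
  "vertex_count P = card (fst ` P) + card (snd ` P)"

lemma finite_biregular_graphs: "finite (biregular_graphs M N db dw)"
proof -
  have "biregular_graphs M N db dw \<subseteq> (\<lambda>S x y. (x, y) \<in> S) ` Pow ({..<M} \<times> {..<N})"
  proof
    fix A assume A: "A \<in> biregular_graphs M N db dw"
    have "A = (\<lambda>x y. (x, y) \<in> {(x, y). A x y})" by simp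
    moreover have "{(x, y). A x y} \<in> Pow ({..<M} \<times> {..<N})"
      using A unfolding biregular_graphs_def by auto
    ultimately show "A \<in> (\<lambda>S x y. (x, y) \<in> S) ` Pow ({..<M} \<times> {..<N})" by blast
  qed
  then show ?thesis by (rule finite_subset) simp
qed

lemma finite_graphs_containing: "finite (graphs_containing M N db dw P)"
  unfolding graphs_containing_def using finite_biregular_graphs by simp

lemma graphs_containing_empty [simp]:
  "graphs_containing M N db dw {} = biregular_graphs M N db dw"
  unfolding graphs_containing_def by simp

lemma graphs_containing_subset_biregular_graphs:
  "graphs_containing M N db dw P \<subseteq> biregular_graphs M N db dw"
  unfolding graphs_containing_def by blast

lemma graphs_containing_antimono:
  "P \<subseteq> Q \<Longrightarrow> graphs_containing M N db dw Q \<subseteq> graphs_containing M N db dw P"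
  unfolding graphs_containing_def by blast

lemma conversep_biregular_graphs:
  "A \<in> biregular_graphs M N db dw \<Longrightarrow> A\<inverse>\<inverse> \<in> biregular_graphs N M dw db"
  unfolding biregular_graphs_def by auto

lemma graphs_containing_conversep:
  "graphs_containing N M dw db (prod.swap ` P) = conversep ` graphs_containing M N db dw P"
proof
  show "graphs_containing N M dw db (prod.swap ` P) \<subseteq> conversep ` graphs_containing M N db dw P"
  proof
    fix B assume "B \<in> graphs_containing N M dw db (prod.swap ` P)"
    then have "B\<inverse>\<inverse> \<in> graphs_containing M N db dw P"
      unfolding graphs_containing_def by (auto dest: conversep_biregular_graphs)
    then show "B \<in> conversep ` graphs_containing M N db dw P"
      by (metis conversep_conversep imageI)
  qed
qed (auto simp: graphs_containing_def conversep_biregular_graphs)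

lemma card_graphs_containing_conversep:
  "card (graphs_containing N M dw db (prod.swap ` P)) = card (graphs_containing M N db dw P)"
proof -
  have "inj (conversep :: (nat \<Rightarrow> nat \<Rightarrow> bool) \<Rightarrow> _)"
    by (metis conversep_conversep injI)
  then show ?thesis
    unfolding graphs_containing_conversep by (simp add: card_image inj_on_subset)
qed

lemma permute_white_biregular_graphs:
  assumes \<sigma>: "\<sigma> permutes {..<N}" and A: "A \<in> biregular_graphs M N db dw"
  shows "(\<lambda>x y. A x (\<sigma> y)) \<in> biregular_graphs M N db dw"
proof -
  have \<sigma>_lt: "\<sigma> y < N \<longleftrightarrow> y < N" for y
    using permutes_in_image[OF \<sigma>] by simp
  have "card {y. y < N \<and> A x (\<sigma> y)} = card {w. w < N \<and> A x w}" for x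
  proof -
    have "\<sigma> ` {y. y < N \<and> A x (\<sigma> y)} = {w. w < N \<and> A x w}"
    proof (intro equalityI subsetI)
      fix w assume "w \<in> {w. w < N \<and> A x w}"
      then show "w \<in> \<sigma> ` {y. y < N \<and> A x (\<sigma> y)}"
        using \<sigma>_lt[of "inv \<sigma> w"] permutes_inverses(1)[OF \<sigma>]
        by (intro image_eqI[where x = "inv \<sigma> w"]) auto
    qed (use \<sigma>_lt in auto)
    then show ?thesis
      by (metis card_image inj_on_subset permutes_inj[OF \<sigma>] subset_UNIV)
  qed
  then show ?thesis
    using A \<sigma>_lt unfolding biregular_graphs_def by auto
qed

lemma card_graphs_containing_permute_white:
  assumes \<sigma>: "\<sigma> permutes {..<N}"
  shows "card (graphs_containing M N db dw (apsnd \<sigma> ` P)) = card (graphs_containing M N db dw P)"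
proof -
  let ?relabel = "\<lambda>(A :: nat \<Rightarrow> nat \<Rightarrow> bool) x y. A x (\<sigma> y)"
  have "inj ?relabel"
  proof (rule injI)
    fix A B :: "nat \<Rightarrow> nat \<Rightarrow> bool" assume "?relabel A = ?relabel B"
    then have "A x (\<sigma> (inv \<sigma> y)) = B x (\<sigma> (inv \<sigma> y))" for x y by metis
    then show "A = B" by (simp add: fun_eq_iff permutes_inverses[OF \<sigma>])
  qed
  moreover have "?relabel ` graphs_containing M N db dw (apsnd \<sigma> ` P) = graphs_containing M N db dw P"
  proof
    show "?relabel ` graphs_containing M N db dw (apsnd \<sigma> ` P) \<subseteq> graphs_containing M N db dw P"
      using permute_white_biregular_graphs[OF \<sigma>] unfolding graphs_containing_def by fastforce
  next
    show "graphs_containing M N db dw P \<subseteq> ?relabel ` graphs_containing M N db dw (apsnd \<sigma> ` P)"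
    proof
      fix B assume B: "B \<in> graphs_containing M N db dw P"
      define A where "A = (\<lambda>x y. B x (inv \<sigma> y))"
      have "A \<in> graphs_containing M N db dw (apsnd \<sigma> ` P)"
        using B permute_white_biregular_graphs[OF permutes_inv[OF \<sigma>]]
        unfolding A_def graphs_containing_def by (auto simp: permutes_inverses[OF \<sigma>])
      moreover have "B = ?relabel A"
        by (simp add: A_def permutes_inverses[OF \<sigma>])
      ultimately show "B \<in> ?relabel ` graphs_containing M N db dw (apsnd \<sigma> ` P)" by blast
    qed
  qed
  ultimately show ?thesis
    by (metis card_image inj_on_subset subset_UNIV)
qed

lemma card_graphs_containing_new_white_eq:
  assumes "y < N" "y' < N" "y \<notin> snd ` Q" "y' \<notin> snd ` Q"
  shows "card (graphs_containing M N db dw (insert (x, y) Q))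
       = card (graphs_containing M N db dw (insert (x, y') Q))"
proof -
  have "apsnd (transpose y y') e = e" if "e \<in> Q" for e
    using that assms(3,4) by (cases e) (metis snd_conv image_eqI transpose_apply_other apsnd_conv)
  then have "apsnd (transpose y y') ` insert (x, y) Q = insert (x, y') Q"
    by force
  moreover have "transpose y y' permutes {..<N}"
    using assms(1,2) by (simp add: permutes_swap_id)
  ultimately show ?thesis
    by (metis card_graphs_containing_permute_white)
qed

lemma new_white_vertex_double_count:
  assumes x: "x < M" and y: "y < N" and y_new: "y \<notin> snd ` Q" and "finite Q"
  shows "(N - card (snd ` Q)) * card (graphs_containing M N db dw (insert (x, y) Q))
       \<le> db * card (graphs_containing M N db dw Q)"
proof -
  let ?H = "graphs_containing M N db dw Q"
  let ?k = "card (graphs_containing M N db dw (insert (x, y) Q))"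
  define Y where "Y = {..<N} - snd ` Q"
  have "card {A \<in> ?H. A x y'} = ?k" if "y' \<in> Y" for y'
  proof -
    have "{A \<in> ?H. A x y'} = graphs_containing M N db dw (insert (x, y') Q)"
      unfolding graphs_containing_def by auto
    then show ?thesis
      using that y y_new card_graphs_containing_new_white_eq[of y' N y Q] unfolding Y_def by auto
  qed
  then have multicount: "(\<Sum>A\<in>?H. card {y'\<in>Y. A x y'}) = ?k * card Y"
    by (intro sum_multicount) (simp_all add: finite_graphs_containing Y_def)
  have row: "card {y' \<in> Y. A x y'} \<le> db" if "A \<in> ?H" for A
  proof -
    have "card {y' \<in> Y. A x y'} \<le> card {y'. y' < N \<and> A x y'}"
      by (rule card_mono) (auto simp: Y_def)
    also have "\<dots> = db"
      using that x unfolding graphs_containing_def biregular_graphs_def by auto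
    finally show ?thesis .
  qed
  have "N - card (snd ` Q) \<le> card Y"
    unfolding Y_def using diff_card_le_card_Diff[of "snd ` Q" "{..<N}"] \<open>finite Q\<close> by simp
  then have "(N - card (snd ` Q)) * ?k \<le> card Y * ?k"
    by (rule mult_le_mono1)
  also have "\<dots> = (\<Sum>A\<in>?H. card {y'\<in>Y. A x y'})"
    by (simp add: multicount)
  also have "\<dots> \<le> db * card ?H"
    using sum_mono[of ?H "\<lambda>A. card {y'\<in>Y. A x y'}" "\<lambda>_. db"] row by (simp add: mult.commute)
  finally show ?thesis .
qed

lemma new_black_vertex_double_count:
  assumes "x < M" "y < N" "x \<notin> fst ` Q" "finite Q"
  shows "(M - card (fst ` Q)) * card (graphs_containing M N db dw (insert (x, y) Q))
       \<le> dw * card (graphs_containing M N db dw Q)"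
proof -
  have swap_snd: "snd ` prod.swap ` Q = fst ` Q"
    by (simp add: image_image)
  have "(M - card (fst ` Q)) * card (graphs_containing N M dw db (prod.swap ` insert (x, y) Q))
      \<le> dw * card (graphs_containing N M dw db (prod.swap ` Q))"
    using new_white_vertex_double_count[of y N x M "prod.swap ` Q" dw db] assms
    by (simp add: swap_snd)
  then show ?thesis
    by (simp only: card_graphs_containing_conversep)
qed

lemma card_graphs_containing_new_vertex:
  assumes x: "x < M" and y: "y < N" and new: "x \<notin> fst ` Q \<or> y \<notin> snd ` Q"
    and "finite Q" and small: "2 * card Q \<le> N" and "N \<le> M" and deg: "M * db = N * dw"
  shows "N * card (graphs_containing M N db dw (insert (x, y) Q))
       \<le> 2 * db * card (graphs_containing M N db dw Q)"
proof -
  let ?k = "card (graphs_containing M N db dw (insert (x, y) Q))"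
  let ?h = "card (graphs_containing M N db dw Q)"
  consider "y \<notin> snd ` Q" | "x \<notin> fst ` Q"
    using new by blast
  then show ?thesis
  proof cases
    case 1
    have "N \<le> 2 * (N - card (snd ` Q))"
      using card_image_le[OF \<open>finite Q\<close>, of snd] small by linarith
    then have "N * ?k \<le> 2 * ((N - card (snd ` Q)) * ?k)"
      by (metis mult.assoc mult_le_mono1)
    also have "\<dots> \<le> 2 * (db * ?h)"
      using new_white_vertex_double_count[OF x y 1 \<open>finite Q\<close>] by simp
    finally show ?thesis by simp
  next
    case 2
    have "M \<le> 2 * (M - card (fst ` Q))"
      using card_image_le[OF \<open>finite Q\<close>, of fst] small \<open>N \<le> M\<close> by linarith
    then have "M * ?k \<le> 2 * ((M - card (fst ` Q)) * ?k)"
      by (metis mult.assoc mult_le_mono1)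
    also have "\<dots> \<le> 2 * (dw * ?h)"
      using new_black_vertex_double_count[OF x y 2 \<open>finite Q\<close>] by simp
    finally have "N * (M * ?k) \<le> N * (2 * dw * ?h)"
      by simp
    also have "\<dots> = M * (2 * db * ?h)"
      using deg by (simp add: algebra_simps)
    finally have "M * (N * ?k) \<le> M * (2 * db * ?h)"
      by (simp add: algebra_simps)
    then show ?thesis
      using x by simp
  qed
qed

lemma card_graphs_containing_new_vertex_le:
  assumes "x < M" and "y < N" and "x \<notin> fst ` Q \<or> y \<notin> snd ` Q"
    and "finite Q" and "2 * card Q \<le> N" and "N \<le> M" and "M * db = N * dw"
  shows "real (card (graphs_containing M N db dw (insert (x, y) Q)))
       \<le> 2 * real db / real N * real (card (graphs_containing M N db dw Q))"
proof -
  have "real (N * card (graphs_containing M N db dw (insert (x, y) Q)))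
      \<le> real (2 * db * card (graphs_containing M N db dw Q))"
    using card_graphs_containing_new_vertex[OF assms] by (rule of_nat_mono)
  then show ?thesis
    using \<open>y < N\<close> by (simp add: field_simps)
qed

lemma card_graphs_containing_le:
  assumes "finite P" and "P \<subseteq> {..<M} \<times> {..<N}" and "2 * card P \<le> N"
    and "N \<le> M" and "M * db = N * dw" and "2 * k \<le> vertex_count P + 1"
  shows "real (card (graphs_containing M N db dw P))
       \<le> real (card (biregular_graphs M N db dw)) * (2 * real db / real N) ^ k"
  using assms(1-3,6)
proof (induction P arbitrary: k rule: finite_induct)
  case empty
  then have "k = 0"
    by (simp add: vertex_count_def)
  then show ?case
    by simp
next
  case (insert e Q)
  obtain x y where e: "e = (x, y)" and x: "x < M" and y: "y < N"
    using insert.prems(1) by auto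
  let ?g = "real (card (biregular_graphs M N db dw))"
  let ?r = "2 * real db / real N"
  have IH: "real (card (graphs_containing M N db dw Q)) \<le> ?g * ?r ^ j"
    if "2 * j \<le> vertex_count Q + 1" for j
    using insert that by auto
  show ?case
  proof (cases "x \<in> fst ` Q \<and> y \<in> snd ` Q")
    case True
    then have "vertex_count (insert e Q) = vertex_count Q"
      by (simp add: e vertex_count_def insert_absorb)
    then have "real (card (graphs_containing M N db dw Q)) \<le> ?g * ?r ^ k"
      using IH insert.prems(3) by simp
    moreover have "card (graphs_containing M N db dw (insert e Q)) \<le> card (graphs_containing M N db dw Q)"
      by (intro card_mono finite_graphs_containing graphs_containing_antimono) auto
    ultimately show ?thesis by linarith
  next
    case False
    have "2 * card Q \<le> N"
      using insert by simp
    then have step: "real (card (graphs_containing M N db dw (insert e Q)))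
        \<le> ?r * real (card (graphs_containing M N db dw Q))"
      using card_graphs_containing_new_vertex_le[OF x y _ insert.hyps(1) _ assms(4,5)] False e
      by auto
    have vertices: "vertex_count (insert e Q) \<le> vertex_count Q + 2"
      using insert.hyps(1) by (simp add: e vertex_count_def card_insert_if)
    show ?thesis
    proof (cases k)
      case 0
      then show ?thesis
        using card_mono[OF finite_biregular_graphs graphs_containing_subset_biregular_graphs] by simp
    next
      case (Suc j)
      have "?r * real (card (graphs_containing M N db dw Q)) \<le> ?r * (?g * ?r ^ j)"
        using IH[of j] insert.prems(3) vertices Suc by (intro mult_left_mono) simp_all
      then show ?thesis
        using order_trans[OF step] by (simp add: Suc algebra_simps)
    qed
  qed
qed

lemma unif_expect_contains_edges:
  "unif_expect M N db dw (\<lambda>A. of_bool (\<forall>(x, y)\<in>P. A x y))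
     = card (graphs_containing M N db dw P) / card (biregular_graphs M N db dw)"
proof -
  have "(\<Sum>A\<in>biregular_graphs M N db dw. (of_bool (\<forall>(x, y)\<in>P. A x y) :: real))
      = of_nat (card (biregular_graphs M N db dw \<inter> {A. \<forall>(x, y)\<in>P. A x y}))"
    by (simp add: finite_biregular_graphs)
  also have "biregular_graphs M N db dw \<inter> {A. \<forall>(x, y)\<in>P. A x y} = graphs_containing M N db dw P"
    unfolding graphs_containing_def by blast
  finally show ?thesis
    unfolding unif_expect_def by simp
qed

lemma unif_expect_contains_edges_le:
  assumes "finite P" and "P \<subseteq> {..<M} \<times> {..<N}" and "2 * card P \<le> N"
    and "N \<le> M" and "M * db = N * dw" and "2 * k \<le> vertex_count P + 1"
  shows "unif_expect M N db dw (\<lambda>A. of_bool (\<forall>(x, y)\<in>P. A x y)) \<le> 2 ^ k * (real db / real N) ^ k"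
proof (cases "card (biregular_graphs M N db dw) = 0")
  case False
  then have "real (card (graphs_containing M N db dw P)) / real (card (biregular_graphs M N db dw))
      \<le> (2 * real db / real N) ^ k"
    using card_graphs_containing_le[OF assms] by (simp add: divide_le_eq mult.commute)
  then show ?thesis
    by (simp add: unif_expect_contains_edges power_mult_distrib[symmetric])
qed (simp add: unif_expect_contains_edges)

lemma prod_entry_eq_of_bool:
  "(\<Prod>(x, y)\<leftarrow>es. entry A x y) = of_bool (\<forall>(x, y)\<in>set es. A x y)"
  by (induction es) (auto simp: entry_def)

lemma vertex_count_le: "finite P \<Longrightarrow> vertex_count P \<le> 2 * card P"
  unfolding vertex_count_def using card_image_le[of P fst] card_image_le[of P snd] by simp

lemma unif_expect_prod_entries_le:
  assumes "set es \<subseteq> {..<M} \<times> {..<N}" and "length es \<le> 4" and "8 \<le> N"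
    and "N \<le> M" and "M * db = N * dw" and "2 * k \<le> vertex_count (set es) + 1"
  shows "unif_expect M N db dw (\<lambda>A. \<Prod>(x, y)\<leftarrow>es. entry A x y) \<le> 16 * (real db / real N) ^ k"
proof -
  have "k \<le> 4"
    using vertex_count_le[of "set es"] card_length[of es] assms(2,6) by simp
  have "2 * card (set es) \<le> N"
    using card_length[of es] assms(2,3) by linarith
  then have "unif_expect M N db dw (\<lambda>A. \<Prod>(x, y)\<leftarrow>es. entry A x y) \<le> 2 ^ k * (real db / real N) ^ k"
    using unif_expect_contains_edges_le[of "set es"] assms by (simp add: prod_entry_eq_of_bool)
  also have "\<dots> \<le> 16 * (real db / real N) ^ k"
    using power_increasing[OF \<open>k \<le> 4\<close>, of "2::real"] by (intro mult_right_mono) simp_all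
  finally show ?thesis .
qed

theorem mainTheorem10:
  fixes alpha c0 :: real
  assumes "alpha \<ge> 1" and "c0 > 0"
  shows "\<exists>C::real. \<exists>N0::nat. \<forall>N M db dw :: nat.
     (N \<ge> N0 \<and> real M = alpha * real N \<and> M * db = N * dw \<and> db > 0 \<and> dw > 0
      \<and> real N powr c0 \<le> real db \<and> real db \<le> real N powr (2/3 - c0)) \<longrightarrow>
     (\<forall>i m j n :: nat. i < M \<and> m < M \<and> j < N \<and> n < N \<longrightarrow>
        unif_expect M N db dw (\<lambda>A. entry A i j * entry A m n)
          \<le> C * (real db / real N) ^ (2 - (4 - (card {i, m} + card {j, n})) div 2))
     \<and> (\<forall>i m k p j n l q :: nat.
          i < M \<and> m < M \<and> k < M \<and> p < M \<and> j < N \<and> n < N \<and> l < N \<and> q < N \<longrightarrow>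
        unif_expect M N db dw (\<lambda>A. entry A i j * entry A m n * entry A k l * entry A p q)
          \<le> C * (real db / real N) ^ (4 - (8 - (card {i, m, k, p} + card {j, n, l, q})) div 2))"
proof (intro exI allI impI conjI)
  fix N M db dw :: nat
  assume H: "N \<ge> 8 \<and> real M = alpha * real N \<and> M * db = N * dw \<and> db > 0 \<and> dw > 0
      \<and> real N powr c0 \<le> real db \<and> real db \<le> real N powr (2/3 - c0)"
  then have N8: "8 \<le> N" and deg: "M * db = N * dw" and "real N \<le> real M"
    using assms(1) mult_right_mono[of 1 alpha "real N"] by auto
  then have MN: "N \<le> M" by simp
  fix i m j n :: nat
  have two_edges: "2 * (2 - (4 - v) div 2) \<le> v + 1" for v :: nat
    by presburger
  show "unif_expect M N db dw (\<lambda>A. entry A i j * entry A m n)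
      \<le> 16 * (real db / real N) ^ (2 - (4 - (card {i, m} + card {j, n})) div 2)"
    if "i < M \<and> m < M \<and> j < N \<and> n < N"
    using unif_expect_prod_entries_le[OF _ _ N8 MN deg, of "[(i, j), (m, n)]"] that
      two_edges[of "card {i, m} + card {j, n}"]
    by (simp add: vertex_count_def)
  fix k p l q :: nat
  have four_edges: "2 * (4 - (8 - v) div 2) \<le> v + 1" for v :: nat
    by presburger
  show "unif_expect M N db dw (\<lambda>A. entry A i j * entry A m n * entry A k l * entry A p q)
      \<le> 16 * (real db / real N) ^ (4 - (8 - (card {i, m, k, p} + card {j, n, l, q})) div 2)"
    if "i < M \<and> m < M \<and> k < M \<and> p < M \<and> j < N \<and> n < N \<and> l < N \<and> q < N"
    using unif_expect_prod_entries_le[OF _ _ N8 MN deg, of "[(i, j), (m, n), (k, l), (p, q)]"] that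
      four_edges[of "card {i, m, k, p} + card {j, n, l, q}"]
    by (simp add: vertex_count_def mult.assoc)
qed

end
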